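(* Let $\mathcal{X}$ be a set, $\mathcal{Y}$ a finite set of labels, $n\ge1$, $\mathcal{F}$ a nonempty class of functions $\mathcal{X}\to\mathcal{Y}$, and let $T$ be the training procedure $T(\mathbf{x},\mathbf{y})=\arg\min_{f\in\mathcal{F}}\sum_{i=1}^n\mathbbm{1}_{f(x_i)\ne y_i}$ (any minimizer). Let $\mathcal{D}_{\mathrm{train}}$ be any distribution over $(\mathcal{X}\times\mathcal{Y})^n$ and $\eta>0$. Define $\mathsf{Train}=\Pr[f(x_i)=y_i]$ where $(\mathbf{x},\mathbf{y})\sim\mathcal{D}_{\mathrm{train}}$, $f=T(\mathbf{x},\mathbf{y})$ and $i$ is uniform on $\{1,\ldots,n\}$; and $\mathsf{Train}(\eta)=\Pr[\tilde f(x_i)=y_i]$ where $(\mathbf{x},\mathbf{y})\sim\mathcal{D}_{\mathrm{train}}$, each $\tilde y_i$ independently equals $y_i$ with probability $1-\eta$ and is uniform on $\mathcal{Y}$ otherwise, $\tilde f=T(\mathbf{x},\tilde{\mathbf{y}})$, and $i$ is uniform on $\{1,\ldots,n\}$. Then the robustness gap satisfies $$\big(\mathsf{Train}-\mathsf{Train}(\eta)\big)_+\le 2\eta.$$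
   Context: $x_+=\max(x,0)$. Accuracies are measured with respect to the original (uncorrupted) labels $y_i$. *)

theory Defs
  imports "HOL-Probability.Probability"
begin

text \<open>A training set of size n is a list S of length n of pairs (x_i, y_i).
  Indices are 0-based: i ranges over {0..<n}.\<close>

definition train_err :: "('x \<Rightarrow> 'y) \<Rightarrow> ('x \<times> 'y) list \<Rightarrow> nat" where
  "train_err f S = card {i. i < length S \<and> f (fst (S ! i)) \<noteq> snd (S ! i)}"

definition is_erm :: "('x \<Rightarrow> 'y) set \<Rightarrow> nat \<Rightarrow> (('x \<times> 'y) list \<Rightarrow> ('x \<Rightarrow> 'y)) \<Rightarrow> bool" where
  "is_erm F n T \<longleftrightarrow> (\<forall>S. length S = n \<longrightarrow>
      T S \<in> F \<and> (\<forall>f\<in>F. train_err (T S) S \<le> train_err f S))"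

definition emp_acc :: "nat \<Rightarrow> ('x \<Rightarrow> 'y) \<Rightarrow> ('x \<times> 'y) list \<Rightarrow> real" where
  "emp_acc n f S = (1 / real n) * (\<Sum>i<n. if f (fst (S ! i)) = snd (S ! i) then 1 else 0)"

text \<open>Probability of the noisy label vector ys' given clean labels ys: independently per
  coordinate, keep the label with prob. 1-eta, else resample uniformly on the label type.\<close>
definition noise_prob :: "nat \<Rightarrow> real \<Rightarrow> ('y::finite) list \<Rightarrow> 'y list \<Rightarrow> real" where
  "noise_prob n \<eta> ys ys' =
     (\<Prod>i<n. (if ys' ! i = ys ! i then 1 - \<eta> else 0) + \<eta> / real (CARD('y)))"

text \<open>Conditional (given the clean sample S) accuracy for Train and Train(eta).\<close>
definition clean_acc :: "nat \<Rightarrow> (('x \<times> 'y) list \<Rightarrow> ('x \<Rightarrow> 'y)) \<Rightarrow> ('x \<times> 'y) list \<Rightarrow> real" where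
  "clean_acc n T S = emp_acc n (T S) S"

definition noisy_acc :: "nat \<Rightarrow> real \<Rightarrow> (('x \<times> ('y::finite)) list \<Rightarrow> ('x \<Rightarrow> 'y)) \<Rightarrow> ('x \<times> 'y) list \<Rightarrow> real" where
  "noisy_acc n \<eta> T S =
     (\<Sum>ys' \<in> {ys'. length ys' = n}. noise_prob n \<eta> (map snd S) ys' *
         emp_acc n (T (zip (map fst S) ys')) S)"

definition Train :: "('x \<times> 'y) list measure \<Rightarrow> nat \<Rightarrow> (('x \<times> 'y) list \<Rightarrow> ('x \<Rightarrow> 'y)) \<Rightarrow> real" where
  "Train D n T = (\<integral>S. clean_acc n T S \<partial>D)"

definition Train_noisy :: "('x \<times> ('y::finite)) list measure \<Rightarrow> nat \<Rightarrow> real \<Rightarrow> (('x \<times> 'y) list \<Rightarrow> ('x \<Rightarrow> 'y)) \<Rightarrow> real" where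
  "Train_noisy D n \<eta> T = (\<integral>S. noisy_acc n \<eta> T S \<partial>D)"

end

theory Submission
  imports Defs
begin

text \<open>Let f be the ERM on the clean labels y and g the ERM on the noisy labels y'. If y and y'
  differ in d positions, then every classifier's agreement count changes by at most d between
  y and y'. As g agrees with y' at least as often as f does, g agrees with y at least
  (agreements of f with y) - 2d times. Averaged over the noise, d has mean
  n \<eta> (1 - 1/|Y|) \<le> n \<eta>, so the accuracy drops by at most 2 \<eta> for every clean sample, and hence
  in expectation.\<close>

definition label_noise :: "real \<Rightarrow> 'y::finite \<Rightarrow> 'y \<Rightarrow> real" where
  "label_noise \<eta> y y' = (if y' = y then 1 - \<eta> else 0) + \<eta> / real CARD('y)"

definition hamming_dist :: "nat \<Rightarrow> 'y list \<Rightarrow> 'y list \<Rightarrow> real" where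
  "hamming_dist n ys ys' = (\<Sum>i<n. if ys ! i = ys' ! i then 0 else 1)"

definition agreements :: "nat \<Rightarrow> ('x \<Rightarrow> 'y) \<Rightarrow> 'x list \<Rightarrow> 'y list \<Rightarrow> real" where
  "agreements n f xs ys = (\<Sum>i<n. if f (xs ! i) = ys ! i then 1 else 0)"

lemma label_noise_nonneg: "0 \<le> \<eta> \<Longrightarrow> \<eta> \<le> 1 \<Longrightarrow> 0 \<le> label_noise \<eta> y y'"
  by (simp add: label_noise_def)

lemma sum_label_noise: "(\<Sum>y'\<in>UNIV. label_noise \<eta> (y::'y::finite) y') = 1"
  by (simp add: label_noise_def sum.distrib)

lemma label_noise_flip_prob:
  "(\<Sum>y'\<in>UNIV. label_noise \<eta> (y::'y::finite) y' * (if y = y' then 0 else 1))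
     = \<eta> * (1 - 1 / real CARD('y))"
proof -
  have "(\<Sum>y'\<in>UNIV. label_noise \<eta> y y' * (if y = y' then 0 else 1))
      = (\<Sum>y'\<in>UNIV. label_noise \<eta> y y' - (if y' = y then label_noise \<eta> y y' else 0))"
    by (rule sum.cong) auto
  also have "\<dots> = 1 - label_noise \<eta> y y"
    by (simp add: sum_subtractf sum_label_noise)
  finally show ?thesis
    by (simp add: label_noise_def algebra_simps)
qed

lemma sum_lists_length_Suc:
  "(\<Sum>ys\<in>{ys::'y::finite list. length ys = Suc n}. g ys)
     = (\<Sum>y\<in>UNIV. \<Sum>ys\<in>{ys. length ys = n}. g (y # ys))"
proof -
  have "{ys::'y list. length ys = Suc n} = (\<lambda>(y, ys). y # ys) ` (UNIV \<times> {ys. length ys = n})"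
    by (auto simp: length_Suc_conv)
  moreover have "inj_on (\<lambda>(y, ys). y # (ys::'y list)) (UNIV \<times> {ys. length ys = n})"
    by (auto simp: inj_on_def)
  ultimately show ?thesis
    by (simp add: sum.reindex sum.cartesian_product split_def)
qed

lemma noise_prob_Cons:
  "noise_prob (Suc n) \<eta> (y # ys) (y' # ys') = label_noise \<eta> y y' * noise_prob n \<eta> ys ys'"
  unfolding noise_prob_def label_noise_def prod.lessThan_Suc_shift by simp

lemma hamming_dist_Cons:
  "hamming_dist (Suc n) (y # ys) (y' # ys') = (if y = y' then 0 else 1) + hamming_dist n ys ys'"
  unfolding hamming_dist_def sum.lessThan_Suc_shift by simp

lemma noise_prob_nonneg: "0 \<le> \<eta> \<Longrightarrow> \<eta> \<le> 1 \<Longrightarrow> 0 \<le> noise_prob n \<eta> ys ys'"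
  unfolding noise_prob_def by (intro prod_nonneg) auto

lemma sum_noise_prob:
  "length ys = n \<Longrightarrow> (\<Sum>ys'\<in>{ys'::'y::finite list. length ys' = n}. noise_prob n \<eta> ys ys') = 1"
proof (induction n arbitrary: ys)
  case 0
  then show ?case by (simp add: noise_prob_def)
next
  case (Suc n)
  then obtain y ys0 where ys: "ys = y # ys0" "length ys0 = n"
    by (cases ys) auto
  then show ?case
    using Suc.IH[OF ys(2)]
    by (simp add: sum_lists_length_Suc noise_prob_Cons sum_distrib_left[symmetric]
        sum_distrib_right[symmetric] sum_label_noise)
qed

lemma expected_hamming_dist:
  "length ys = n \<Longrightarrow>
   (\<Sum>ys'\<in>{ys'::'y::finite list. length ys' = n}. noise_prob n \<eta> ys ys' * hamming_dist n ys ys')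
     = real n * \<eta> * (1 - 1 / real CARD('y))"
proof (induction n arbitrary: ys)
  case 0
  then show ?case by (simp add: hamming_dist_def)
next
  case (Suc n)
  then obtain y ys0 where ys: "ys = y # ys0" "length ys0 = n"
    by (cases ys) auto
  let ?L = "{ys'::'y list. length ys' = n}"
  let ?flip = "\<lambda>y'. if y = y' then 0 else 1 :: real"
  have "(\<Sum>ys'\<in>{ys'. length ys' = Suc n}. noise_prob (Suc n) \<eta> ys ys' * hamming_dist (Suc n) ys ys')
      = (\<Sum>y'\<in>UNIV. label_noise \<eta> y y' * ?flip y' * (\<Sum>ys'\<in>?L. noise_prob n \<eta> ys0 ys')
          + label_noise \<eta> y y' * (\<Sum>ys'\<in>?L. noise_prob n \<eta> ys0 ys' * hamming_dist n ys0 ys'))"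
    by (simp add: ys sum_lists_length_Suc noise_prob_Cons hamming_dist_Cons sum.distrib
        sum_distrib_left algebra_simps)
  also have "\<dots> = (\<Sum>y'\<in>UNIV. label_noise \<eta> y y' * ?flip y')
      + (\<Sum>y'\<in>UNIV. label_noise \<eta> y y') * (real n * \<eta> * (1 - 1 / real CARD('y)))"
    by (simp add: sum_noise_prob[OF ys(2)] Suc.IH[OF ys(2)] sum.distrib sum_distrib_right)
  also have "\<dots> = real (Suc n) * \<eta> * (1 - 1 / real CARD('y))"
    by (simp add: label_noise_flip_prob sum_label_noise algebra_simps)
  finally show ?case .
qed

lemma emp_acc_agreements:
  "length S = n \<Longrightarrow> emp_acc n f S = agreements n f (map fst S) (map snd S) / real n"
  unfolding emp_acc_def agreements_def by (simp add: sum_divide_distrib)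

lemma train_err_zip:
  assumes "length xs = n" "length ys = n"
  shows "real (train_err f (zip xs ys)) = real n - agreements n f xs ys"
proof -
  have "train_err f (zip xs ys) = card {i\<in>{..<n}. f (xs ! i) \<noteq> ys ! i}"
    unfolding train_err_def using assms by (intro arg_cong[where f = card]) auto
  also have "\<dots> = (\<Sum>i<n. if f (xs ! i) \<noteq> ys ! i then 1 else 0)"
    by (simp add: sum.inter_filter[symmetric])
  finally have "real (train_err f (zip xs ys)) = (\<Sum>i<n. if f (xs ! i) \<noteq> ys ! i then 1 else 0)"
    by (simp add: if_distrib cong: if_cong)
  also have "\<dots> = (\<Sum>i<n. 1 - (if f (xs ! i) = ys ! i then 1 else 0))"
    by (rule sum.cong) auto
  finally show ?thesis
    by (simp add: sum_subtractf agreements_def)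
qed

lemma agreements_change_labels:
  "\<bar>agreements n f xs ys - agreements n f xs ys'\<bar> \<le> hamming_dist n ys ys'"
proof -
  have "\<bar>agreements n f xs ys - agreements n f xs ys'\<bar>
      \<le> (\<Sum>i<n. \<bar>(if f (xs ! i) = ys ! i then 1 else 0) - (if f (xs ! i) = ys' ! i then 1 else 0)\<bar>)"
    unfolding agreements_def sum_subtractf[symmetric] by (rule sum_abs)
  also have "\<dots> \<le> hamming_dist n ys ys'"
    unfolding hamming_dist_def by (rule sum_mono) auto
  finally show ?thesis .
qed

lemma erm_maximises_agreements:
  assumes "is_erm F n T" "length xs = n" "length ys = n" "f \<in> F"
  shows "agreements n f xs ys \<le> agreements n (T (zip xs ys)) xs ys"
proof -
  have "train_err (T (zip xs ys)) (zip xs ys) \<le> train_err f (zip xs ys)"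
    using assms by (simp add: is_erm_def)
  then show ?thesis
    using train_err_zip[OF assms(2,3), of f] train_err_zip[OF assms(2,3), of "T (zip xs ys)"]
    by (simp add: of_nat_le_iff[symmetric])
qed

lemma erm_noisy_labels_agreements:
  assumes "is_erm F n T" "length xs = n" "length ys' = n" "f \<in> F"
  shows "agreements n f xs ys - 2 * hamming_dist n ys ys'
           \<le> agreements n (T (zip xs ys')) xs ys"
  using erm_maximises_agreements[OF assms]
    agreements_change_labels[of n f xs ys ys']
    agreements_change_labels[of n "T (zip xs ys')" xs ys ys']
  by linarith

lemma clean_acc_le_noisy_acc:
  fixes T :: "('x \<times> 'y::finite) list \<Rightarrow> 'x \<Rightarrow> 'y"
  assumes erm: "is_erm F n T" and len: "length S = n" and "0 \<le> \<eta>" "\<eta> \<le> 1"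
  shows "clean_acc n T S \<le> noisy_acc n \<eta> T S + 2 * \<eta>"
proof (cases "n = 0")
  case True
  then show ?thesis
    using assms by (simp add: clean_acc_def noisy_acc_def emp_acc_def)
next
  case False
  define xs where "xs = map fst S"
  define ys where "ys = map snd S"
  let ?L = "{ys'::'y list. length ys' = n}"
  let ?p = "noise_prob n \<eta> ys"
  have lens: "length xs = n" "length ys = n"
    using len by (auto simp: xs_def ys_def)
  have "T S \<in> F"
    using erm len by (simp add: is_erm_def)
  have drop: "clean_acc n T S - 2 * hamming_dist n ys ys' / real n
      \<le> emp_acc n (T (zip xs ys')) S" if "length ys' = n" for ys'
  proof -
    have "(agreements n (T S) xs ys - 2 * hamming_dist n ys ys') / real n
        \<le> agreements n (T (zip xs ys')) xs ys / real n"
      using erm_noisy_labels_agreements[OF erm lens(1) that \<open>T S \<in> F\<close>]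
      by (rule divide_right_mono) simp
    then show ?thesis
      by (simp add: clean_acc_def emp_acc_agreements[OF len] diff_divide_distrib
          flip: xs_def ys_def)
  qed
  have "clean_acc n T S - 2 * \<eta>
      \<le> clean_acc n T S - 2 / real n * (real n * \<eta> * (1 - 1 / real CARD('y)))"
    using False \<open>0 \<le> \<eta>\<close> by (simp add: field_simps)
  also have "\<dots> = clean_acc n T S * (\<Sum>ys'\<in>?L. ?p ys')
      - 2 / real n * (\<Sum>ys'\<in>?L. ?p ys' * hamming_dist n ys ys')"
    by (simp add: expected_hamming_dist[OF lens(2)] sum_noise_prob[OF lens(2)])
  also have "\<dots> = (\<Sum>ys'\<in>?L. ?p ys' * (clean_acc n T S - 2 * hamming_dist n ys ys' / real n))"
    by (simp add: sum_subtractf sum_distrib_left sum_distrib_right algebra_simps)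
  also have "\<dots> \<le> (\<Sum>ys'\<in>?L. ?p ys' * emp_acc n (T (zip xs ys')) S)"
    using assms by (intro sum_mono mult_left_mono drop noise_prob_nonneg) auto
  also have "\<dots> = noisy_acc n \<eta> T S"
    by (simp add: noisy_acc_def xs_def ys_def)
  finally show ?thesis by simp
qed

lemma emp_acc_bounds: "0 \<le> emp_acc n f S" "emp_acc n f S \<le> 1"
proof -
  have "(\<Sum>i<n. if f (fst (S ! i)) = snd (S ! i) then 1 else 0) \<le> (\<Sum>i<n. 1::real)"
    by (intro sum_mono) auto
  then show "emp_acc n f S \<le> 1"
    by (cases "n = 0") (simp_all add: emp_acc_def)
  show "0 \<le> emp_acc n f S"
    unfolding emp_acc_def by (intro mult_nonneg_nonneg sum_nonneg) auto
qed

lemma noisy_acc_bounds: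
  assumes "length S = n" "0 \<le> \<eta>" "\<eta> \<le> 1"
  shows "0 \<le> noisy_acc n \<eta> T S" "noisy_acc n \<eta> T S \<le> 1"
proof -
  show "0 \<le> noisy_acc n \<eta> T S"
    unfolding noisy_acc_def
    using assms by (intro sum_nonneg mult_nonneg_nonneg noise_prob_nonneg emp_acc_bounds)
  have "noisy_acc n \<eta> T S
      \<le> (\<Sum>ys'\<in>{ys'. length ys' = n}. noise_prob n \<eta> (map snd S) ys' * 1)"
    unfolding noisy_acc_def
    using assms by (intro sum_mono mult_left_mono noise_prob_nonneg emp_acc_bounds)
  then show "noisy_acc n \<eta> T S \<le> 1"
    using assms(1) by (simp add: sum_noise_prob)
qed

theorem lemmaD2:
  fixes F :: "('x \<Rightarrow> 'y::finite) set"
    and T :: "('x \<times> 'y) list \<Rightarrow> ('x \<Rightarrow> 'y)"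
    and D :: "('x \<times> 'y) list measure"
    and n :: nat and \<eta> :: real
  assumes "n \<ge> 1"
    and "F \<noteq> {}"
    and "is_erm F n T"
    and "prob_space D"
    and "\<forall>S\<in>space D. length S = n"
    and "clean_acc n T \<in> borel_measurable D"
    and "noisy_acc n \<eta> T \<in> borel_measurable D"
    and "\<eta> > 0" and "\<eta> \<le> 1"
  shows "max (Train D n T - Train_noisy D n \<eta> T) 0 \<le> 2 * \<eta>"
proof -
  interpret prob_space D by fact
  have "\<bar>clean_acc n T S\<bar> \<le> 1" for S
    using emp_acc_bounds[of n "T S" S] by (simp add: clean_acc_def)
  then have clean: "integrable D (clean_acc n T)"
    by (intro integrable_const_bound[where B = 1] AE_I2 assms(6)) simp
  have "\<bar>noisy_acc n \<eta> T S\<bar> \<le> 1" if "S \<in> space D" for S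
    using noisy_acc_bounds[of S n \<eta> T] assms(5,8,9) that by simp
  then have noisy: "integrable D (noisy_acc n \<eta> T)"
    by (intro integrable_const_bound[where B = 1] AE_I2 assms(7)) simp
  have "Train D n T \<le> (\<integral>S. noisy_acc n \<eta> T S + 2 * \<eta> \<partial>D)"
    unfolding Train_def using assms(5,8,9)
    by (intro integral_mono clean Bochner_Integration.integrable_add noisy integrable_const
        clean_acc_le_noisy_acc[OF assms(3)]) auto
  also have "\<dots> = Train_noisy D n \<eta> T + 2 * \<eta>"
    using noisy by (simp add: Train_noisy_def prob_space)
  finally show ?thesis
    using assms(8) by simp
qed

end
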